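(* Let $n\ge1$, $\rho\in\mathbb{R}$, and let $Q_n$ be the $(4n+3)$-dimensional quaternion Lie group with left-invariant frame $e_1,\dots,e_{4n+3}$ as described in the context. Let $g_0$ be a left-invariant metric on $Q_n$ diagonal in this frame, and let $g(t)$ be a solution of the Ricci–Bourguignon flow $\frac{\partial}{\partial t}g(t)=-2\mathrm{Ric}(g(t))+2\rho R(g(t))g(t)$, $g(0)=g_0$, by left-invariant metrics diagonal in this frame, with components $g_\alpha(t)=g(t)(e_\alpha,e_\alpha)$. Then: (a) $\frac{d}{dt}\Big(g_1(t)g_2(t)\cdots g_{4n}(t)\big(g_{4n+1}(t)g_{4n+2}(t)g_{4n+3}(t)\big)^{\frac{2(1-2n\rho)}{1+3\rho}}\Big)=0$; (b) if $\rho<0$ and $G_k(t)=\int_0^t g_k(r)\,dr$ for $k=4n+1,4n+2,4n+3$, then $\lim_{t\to+\infty}G_k(t)=+\infty$; (c) if moreover $g_j(0)=g_1(0)$ for $1\le j\le 4n$ and $g_{4n+1}(0)=g_{4n+2}(0)=g_{4n+3}(0)$, then the solution has the form $g_j(t)=g_1(0)(1+ct)^{\frac{3(1-2n\rho)}{6+2n-6n\rho}}$ for $1\le j\le 4n$, and $g_{4n+k}(t)=g_{4n+1}(0)(1+ct)^{\frac{-n(1+3\rho)}{3+n-3n\rho}}$ for $1\le k\le 3$, where $c=\frac{g_{4n+1}(0)}{g_1(0)^2}(6+2n-6n\rho)$.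
   Context: $Q_n$ is the simply connected 2-step nilpotent Lie group $\mathbb{R}^{4n}\times\mathbb{R}^3$ whose Lie algebra has basis $X_{1l},X_{2l},X_{3l},X_{4l}$ ($1\le l\le n$), $Z_1,Z_2,Z_3$, with nonzero brackets (for each $l$) $[X_{1l},X_{2l}]=-Z_1$, $[X_{1l},X_{3l}]=Z_3$, $[X_{1l},X_{4l}]=Z_2$, $[X_{2l},X_{3l}]=Z_2$, $[X_{2l},X_{4l}]=-Z_3$, $[X_{3l},X_{4l}]=-Z_1$, all other brackets between basis elements being zero (and $Z_1,Z_2,Z_3$ central). Set $e_i=X_{1i}$, $e_{n+i}=X_{2i}$, $e_{2n+i}=X_{3i}$, $e_{3n+i}=X_{4i}$ ($1\le i\le n$), $e_{4n+r}=Z_r$ ($r=1,2,3$), viewed as left-invariant vector fields. A left-invariant metric is diagonal if $g(e_\alpha,e_\beta)=0$ for $\alpha\ne\beta$. For diagonal metrics the flow is equivalent to the ODE system $g_i'=\frac{g_{4n+1}}{g_{n+i}}+\frac{g_{4n+3}}{g_{2n+i}}+\frac{g_{4n+2}}{g_{3n+i}}-\rho g_i\Sigma'$, $g_{n+i}'=\frac{g_{4n+1}}{g_i}+\frac{g_{4n+2}}{g_{2n+i}}+\frac{g_{4n+3}}{g_{3n+i}}-\rho g_{n+i}\Sigma'$, $g_{2n+i}'=\frac{g_{4n+3}}{g_i}+\frac{g_{4n+2}}{g_{n+i}}+\frac{g_{4n+1}}{g_{3n+i}}-\rho g_{2n+i}\Sigma'$, $g_{3n+i}'=\frac{g_{4n+2}}{g_i}+\frac{g_{4n+3}}{g_{n+i}}+\frac{g_{4n+1}}{g_{2n+i}}-\rho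 g_{3n+i}\Sigma'$, $g_{4n+k}'=-g_{4n+k}^2\Sigma_k-\rho g_{4n+k}\Sigma'$, where $\Sigma_1=\sum_{i=1}^n(\frac{1}{g_ig_{n+i}}+\frac{1}{g_{2n+i}g_{3n+i}})$, $\Sigma_2=\sum_{i=1}^n(\frac{1}{g_ig_{3n+i}}+\frac{1}{g_{n+i}g_{2n+i}})$, $\Sigma_3=\sum_{i=1}^n(\frac{1}{g_ig_{2n+i}}+\frac{1}{g_{n+i}g_{3n+i}})$ and $\Sigma'=\sum_{k=1}^3 g_{4n+k}\Sigma_k$ (the scalar curvature is $R=-\frac12\Sigma'$). In part (b) the solution is understood to be defined for all $t\ge0$; in part (c) the formula is understood for $t$ with $1+ct>0$. *)

theory Defs
  imports "HOL-Analysis.Analysis"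
begin

text \<open>Diagonal left-invariant metrics on the quaternion group Q_n are encoded by their
components G 1, ..., G (4n+3), where G a = g(e_a, e_a) in the frame of the context
(e_i = X_1i, e_(n+i) = X_2i, e_(2n+i) = X_3i, e_(3n+i) = X_4i, e_(4n+r) = Z_r).\<close>

definition Sig1 :: "nat \<Rightarrow> (nat \<Rightarrow> real) \<Rightarrow> real" where
  "Sig1 n G = (\<Sum>i=1..n. 1 / (G i * G (n+i)) + 1 / (G (2*n+i) * G (3*n+i)))"

definition Sig2 :: "nat \<Rightarrow> (nat \<Rightarrow> real) \<Rightarrow> real" where
  "Sig2 n G = (\<Sum>i=1..n. 1 / (G i * G (3*n+i)) + 1 / (G (n+i) * G (2*n+i)))"

definition Sig3 :: "nat \<Rightarrow> (nat \<Rightarrow> real) \<Rightarrow> real" where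
  "Sig3 n G = (\<Sum>i=1..n. 1 / (G i * G (2*n+i)) + 1 / (G (n+i) * G (3*n+i)))"

definition SigK :: "nat \<Rightarrow> (nat \<Rightarrow> real) \<Rightarrow> nat \<Rightarrow> real" where
  "SigK n G k = (if k = 1 then Sig1 n G else if k = 2 then Sig2 n G else Sig3 n G)"

text \<open>Sigma' ; the scalar curvature is R = -1/2 Sigma'.\<close>
definition SigP :: "nat \<Rightarrow> (nat \<Rightarrow> real) \<Rightarrow> real" where
  "SigP n G = G (4*n+1) * Sig1 n G + G (4*n+2) * Sig2 n G + G (4*n+3) * Sig3 n G"

text \<open>Right-hand side of the ODE system equivalent to the Ricci-Bourguignon flow
  for diagonal metrics, for the component a (1 <= a <= 4n+3).\<close>
definition qrhs :: "nat \<Rightarrow> real \<Rightarrow> (nat \<Rightarrow> real) \<Rightarrow> nat \<Rightarrow> real" where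
  "qrhs n \<rho> G a =
    (if 1 \<le> a \<and> a \<le> n then
       (let i = a in G (4*n+1) / G (n+i) + G (4*n+3) / G (2*n+i) + G (4*n+2) / G (3*n+i)
                      - \<rho> * G i * SigP n G)
     else if n < a \<and> a \<le> 2*n then
       (let i = a - n in G (4*n+1) / G i + G (4*n+2) / G (2*n+i) + G (4*n+3) / G (3*n+i)
                      - \<rho> * G (n+i) * SigP n G)
     else if 2*n < a \<and> a \<le> 3*n then
       (let i = a - 2*n in G (4*n+3) / G i + G (4*n+2) / G (n+i) + G (4*n+1) / G (3*n+i)
                      - \<rho> * G (2*n+i) * SigP n G)
     else if 3*n < a \<and> a \<le> 4*n then
       (let i = a - 3*n in G (4*n+2) / G i + G (4*n+3) / G (n+i) + G (4*n+1) / G (2*n+i)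
                      - \<rho> * G (3*n+i) * SigP n G)
     else if 4*n < a \<and> a \<le> 4*n+3 then
       (let k = a - 4*n in - G (4*n+k) * G (4*n+k) * SigK n G k - \<rho> * G (4*n+k) * SigP n G)
     else 0)"

definition RB_diag_solution :: "nat \<Rightarrow> real \<Rightarrow> real set \<Rightarrow> (real \<Rightarrow> nat \<Rightarrow> real) \<Rightarrow> bool" where
  "RB_diag_solution n \<rho> J g \<longleftrightarrow>
     is_interval J \<and> 0 \<in> J \<and>
     (\<forall>t\<in>J. \<forall>a\<in>{1..4*n+3}. 0 < g t a \<and>
        ((\<lambda>s. g s a) has_real_derivative qrhs n \<rho> (g t) a) (at t within J))"

end

theory Submission
  imports Defs "HOL-Real_Asymp.Real_Asymp"
begin

text \<open>
For a diagonal solution the logarithmic derivatives g_a'/g_a add up to 2(1 - 2n\<rho>)\<Sigma>' over the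
4n directions X and to -(1 + 3\<rho>)\<Sigma>' over the three central directions, so the weighted
log-volume of (a) is constant.

For \<rho> \<le> 0 every X-component is nondecreasing, hence every \<Sigma>_k decreases along the flow, and
(1/g_(4n+k))' = \<Sigma>_k + \<rho>\<Sigma>'/g_(4n+k) \<le> \<Sigma>_k(0). Thus g_(4n+k)(t) \<ge> 1/(1/g_(4n+k)(0) + \<Sigma>_k(0) t),
whose integral diverges logarithmically (b).

For (c) the stated power functions solve the system with the symmetric initial data; the
right-hand side is locally Lipschitz on the positive orthant, so a Gronwall estimate for
\<Sum>_a (g_a - h_a)^2 identifies them with the given solution.
\<close>

lemma sum_four_blocks:
  fixes f :: "nat \<Rightarrow> 'a::comm_monoid_add"
  shows "(\<Sum>j=1..4*n. f j) = (\<Sum>i=1..n. f i + f (n+i) + f (2*n+i) + f (3*n+i))"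
proof -
  have block: "(\<Sum>j=1..(k+1)*n. f j) = (\<Sum>j=1..k*n. f j) + (\<Sum>i=1..n. f (k*n+i))" for k
    using sum.ub_add_nat[of 1 "k*n" f n] sum.shift_bounds_cl_nat_ivl[of f 1 "k*n" n]
    by (simp add: algebra_simps)
  show ?thesis
    using block[of 3] block[of 2] block[of 1] block[of 0]
    by (simp add: numeral_eq_Suc sum.distrib add.assoc)
qed

lemma four_blocks_cases:
  assumes "j \<in> {1..4*n::nat}"
  obtains (X1) i where "i \<in> {1..n}" "j = i"
    | (X2) i where "i \<in> {1..n}" "j = n + i"
    | (X3) i where "i \<in> {1..n}" "j = 2*n + i"
    | (X4) i where "i \<in> {1..n}" "j = 3*n + i"
proof -
  consider "j \<le> n" | "n < j" "j \<le> 2*n" | "2*n < j" "j \<le> 3*n" | "3*n < j" "j \<le> 4*n"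
    using assms by force
  then show ?thesis
  proof cases
    case 1 then show ?thesis using assms X1 by auto
  next
    case 2 then show ?thesis using X2[of "j - n"] by auto
  next
    case 3 then show ?thesis using X3[of "j - 2*n"] by auto
  next
    case 4 then show ?thesis using X4[of "j - 3*n"] by auto
  qed
qed

lemma qrhs_X1: "i \<in> {1..n} \<Longrightarrow> qrhs n \<rho> G i =
    G (4*n+1) / G (n+i) + G (4*n+3) / G (2*n+i) + G (4*n+2) / G (3*n+i) - \<rho> * G i * SigP n G"
  by (simp add: qrhs_def)

lemma qrhs_X2: "i \<in> {1..n} \<Longrightarrow> qrhs n \<rho> G (n+i) =
    G (4*n+1) / G i + G (4*n+2) / G (2*n+i) + G (4*n+3) / G (3*n+i) - \<rho> * G (n+i) * SigP n G"
  by (simp add: qrhs_def)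

lemma qrhs_X3: "i \<in> {1..n} \<Longrightarrow> qrhs n \<rho> G (2*n+i) =
    G (4*n+3) / G i + G (4*n+2) / G (n+i) + G (4*n+1) / G (3*n+i) - \<rho> * G (2*n+i) * SigP n G"
  by (simp add: qrhs_def)

lemma qrhs_X4: "i \<in> {1..n} \<Longrightarrow> qrhs n \<rho> G (3*n+i) =
    G (4*n+2) / G i + G (4*n+3) / G (n+i) + G (4*n+1) / G (2*n+i) - \<rho> * G (3*n+i) * SigP n G"
  by (simp add: qrhs_def)

lemma qrhs_Z: "k \<in> {1..3} \<Longrightarrow> qrhs n \<rho> G (4*n+k) =
    - G (4*n+k) * G (4*n+k) * SigK n G k - \<rho> * G (4*n+k) * SigP n G"
  by (simp add: qrhs_def)

lemma RB_diag_solution_pos: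
  "RB_diag_solution n \<rho> J g \<Longrightarrow> t \<in> J \<Longrightarrow> a \<in> {1..4*n+3} \<Longrightarrow> 0 < g t a"
  unfolding RB_diag_solution_def by blast

lemma RB_diag_solution_deriv:
  "RB_diag_solution n \<rho> J g \<Longrightarrow> t \<in> J \<Longrightarrow> a \<in> {1..4*n+3} \<Longrightarrow>
    ((\<lambda>s. g s a) has_real_derivative qrhs n \<rho> (g t) a) (at t within J)"
  unfolding RB_diag_solution_def by blast

section \<open>The conserved volume\<close>

lemma sum_qrhs_div_X:
  fixes n :: nat and \<rho> :: real
  assumes nz: "\<And>j. j \<in> {1..4*n} \<Longrightarrow> G j \<noteq> 0"
  shows "(\<Sum>j=1..4*n. qrhs n \<rho> G j / G j) = 2*(1 - 2*n*\<rho>) * SigP n G"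
proof -
  let ?Z1 = "G (4*n+1)" and ?Z2 = "G (4*n+2)" and ?Z3 = "G (4*n+3)"
  have block: "qrhs n \<rho> G i / G i + qrhs n \<rho> G (n+i) / G (n+i) + qrhs n \<rho> G (2*n+i) / G (2*n+i)
      + qrhs n \<rho> G (3*n+i) / G (3*n+i) =
      2 * ?Z1 * (1 / (G i * G (n+i)) + 1 / (G (2*n+i) * G (3*n+i)))
    + 2 * ?Z2 * (1 / (G i * G (3*n+i)) + 1 / (G (n+i) * G (2*n+i)))
    + 2 * ?Z3 * (1 / (G i * G (2*n+i)) + 1 / (G (n+i) * G (3*n+i))) - 4 * \<rho> * SigP n G"
    if i: "i \<in> {1..n}" for i
  proof -
    have "G i \<noteq> 0" "G (n+i) \<noteq> 0" "G (2*n+i) \<noteq> 0" "G (3*n+i) \<noteq> 0" using nz i by auto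
    with i show ?thesis
      by (simp only: qrhs_X1 qrhs_X2 qrhs_X3 qrhs_X4) (simp add: field_simps)
  qed
  have "(\<Sum>j=1..4*n. qrhs n \<rho> G j / G j) = (\<Sum>i=1..n.
      2 * ?Z1 * (1 / (G i * G (n+i)) + 1 / (G (2*n+i) * G (3*n+i)))
    + 2 * ?Z2 * (1 / (G i * G (3*n+i)) + 1 / (G (n+i) * G (2*n+i)))
    + 2 * ?Z3 * (1 / (G i * G (2*n+i)) + 1 / (G (n+i) * G (3*n+i))) - 4 * \<rho> * SigP n G)"
    unfolding sum_four_blocks by (rule sum.cong) (simp_all add: block)
  also have "\<dots> = 2 * ?Z1 * Sig1 n G + 2 * ?Z2 * Sig2 n G + 2 * ?Z3 * Sig3 n G - 4 * n * \<rho> * SigP n G"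
    by (simp add: sum.distrib sum_subtractf sum_distrib_left distrib_left Sig1_def Sig2_def Sig3_def)
  finally show ?thesis by (simp add: SigP_def algebra_simps)
qed

lemma sum_qrhs_div_Z:
  assumes "G (4*n+1) \<noteq> 0" "G (4*n+2) \<noteq> 0" "G (4*n+3) \<noteq> 0"
  shows "qrhs n \<rho> G (4*n+1) / G (4*n+1) + qrhs n \<rho> G (4*n+2) / G (4*n+2)
      + qrhs n \<rho> G (4*n+3) / G (4*n+3) = - (1 + 3*\<rho>) * SigP n G"
proof -
  have "qrhs n \<rho> G (4*n+1) = - G (4*n+1) * G (4*n+1) * Sig1 n G - \<rho> * G (4*n+1) * SigP n G"
    "qrhs n \<rho> G (4*n+2) = - G (4*n+2) * G (4*n+2) * Sig2 n G - \<rho> * G (4*n+2) * SigP n G"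
    "qrhs n \<rho> G (4*n+3) = - G (4*n+3) * G (4*n+3) * Sig3 n G - \<rho> * G (4*n+3) * SigP n G"
    using qrhs_Z[of 1 n \<rho> G] qrhs_Z[of 2 n \<rho> G] qrhs_Z[of 3 n \<rho> G] by (simp_all add: SigK_def)
  with assms show ?thesis
    by (simp only:) (simp add: SigP_def field_simps)
qed

lemma RB_log_volume_has_derivative_zero:
  fixes n :: nat and \<rho> :: real
  assumes sol: "RB_diag_solution n \<rho> J g" and \<rho>: "1 + 3*\<rho> \<noteq> 0" and t: "t \<in> J"
  shows "((\<lambda>s. (\<Sum>j=1..4*n. ln (g s j)) + 2*(1 - 2*n*\<rho>) / (1 + 3*\<rho>) *
      (ln (g s (4*n+1)) + ln (g s (4*n+2)) + ln (g s (4*n+3)))) has_real_derivative 0) (at t within J)"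
proof -
  let ?v = "\<lambda>a. qrhs n \<rho> (g t) a / g t a"
  have ln_deriv: "((\<lambda>s. ln (g s a)) has_real_derivative ?v a) (at t within J)"
    if "a \<in> {1..4*n+3}" for a
    using RB_diag_solution_deriv[OF sol t that] RB_diag_solution_pos[OF sol t that]
    by (auto intro!: derivative_eq_intros simp: field_simps)
  have nz: "g t a \<noteq> 0" if "a \<in> {1..4*n+3}" for a
    using RB_diag_solution_pos[OF sol t that] by simp
  have X: "(\<Sum>j=1..4*n. ?v j) = 2*(1 - 2*n*\<rho>) * SigP n (g t)"
    by (rule sum_qrhs_div_X) (simp add: nz)
  have Z: "?v (4*n+1) + ?v (4*n+2) + ?v (4*n+3) = - (1 + 3*\<rho>) * SigP n (g t)"
    by (rule sum_qrhs_div_Z) (simp_all add: nz)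
  have "(\<Sum>j=1..4*n. ?v j) + 2*(1 - 2*n*\<rho>) / (1 + 3*\<rho>) * (?v (4*n+1) + ?v (4*n+2) + ?v (4*n+3)) = 0"
    unfolding X Z using \<rho> by (simp add: field_simps)
  moreover have "((\<lambda>s. (\<Sum>j=1..4*n. ln (g s j)) + 2*(1 - 2*n*\<rho>) / (1 + 3*\<rho>) *
      (ln (g s (4*n+1)) + ln (g s (4*n+2)) + ln (g s (4*n+3)))) has_real_derivative
      (\<Sum>j=1..4*n. ?v j) + 2*(1 - 2*n*\<rho>) / (1 + 3*\<rho>) * (?v (4*n+1) + ?v (4*n+2) + ?v (4*n+3)))
      (at t within J)"
    by (intro DERIV_add DERIV_sum DERIV_cmult ln_deriv) auto
  ultimately show ?thesis by simp
qed

lemma RB_volume_has_derivative_zero: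
  fixes n :: nat and \<rho> :: real
  assumes sol: "RB_diag_solution n \<rho> J g" and \<rho>: "1 + 3*\<rho> \<noteq> 0" and t: "t \<in> J"
  shows "((\<lambda>s. (\<Prod>j=1..4*n. g s j) *
      (g s (4*n+1) * g s (4*n+2) * g s (4*n+3)) powr (2*(1 - 2*n*\<rho>) / (1 + 3*\<rho>)))
      has_real_derivative 0) (at t within J)"
proof -
  let ?V = "\<lambda>s. (\<Prod>j=1..4*n. g s j) *
      (g s (4*n+1) * g s (4*n+2) * g s (4*n+3)) powr (2*(1 - 2*n*\<rho>) / (1 + 3*\<rho>))"
  let ?L = "\<lambda>s. (\<Sum>j=1..4*n. ln (g s j)) + 2*(1 - 2*n*\<rho>) / (1 + 3*\<rho>) *
      (ln (g s (4*n+1)) + ln (g s (4*n+2)) + ln (g s (4*n+3)))"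
  have V_eq: "?V s = exp (?L s)" if s: "s \<in> J" for s
  proof -
    have pos: "0 < g s a" if "a \<in> {1..4*n+3}" for a
      using RB_diag_solution_pos[OF sol s that] .
    have X: "0 < (\<Prod>j=1..4*n. g s j)" by (rule prod_pos) (simp add: pos)
    have Z: "0 < g s (4*n+1)" "0 < g s (4*n+2)" "0 < g s (4*n+3)" by (simp_all add: pos)
    have "0 < ?V s" using X Z by simp
    moreover have "ln (?V s) = ?L s"
    proof -
      have "ln (\<Prod>j=1..4*n. g s j) = (\<Sum>j=1..4*n. ln (g s j))"
        by (rule ln_prod) (simp_all add: pos less_imp_neq[symmetric])
      moreover have "ln (P * (g s (4*n+1) * g s (4*n+2) * g s (4*n+3)) powr \<alpha>) =
          ln P + \<alpha> * (ln (g s (4*n+1)) + ln (g s (4*n+2)) + ln (g s (4*n+3)))"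
        if "0 < P" for P \<alpha> using that Z by (simp add: ln_mult)
      ultimately show ?thesis using X by simp
    qed
    ultimately show ?thesis by (metis exp_ln)
  qed
  have "((\<lambda>s. exp (?L s)) has_real_derivative 0) (at t within J)"
    using DERIV_chain2[OF DERIV_exp RB_log_volume_has_derivative_zero[OF sol \<rho> t]] by simp
  then show ?thesis
    by (rule has_field_derivative_transform_within[where d=1]) (simp_all only: t V_eq zero_less_one)
qed

section \<open>Growth of the centre for nonpositive \<rho>\<close>

lemma deriv_nonpos_imp_antimono_within:
  fixes f :: "real \<Rightarrow> real"
  assumes "a \<le> b"
    and deriv: "\<And>x. x \<in> {a..b} \<Longrightarrow> (f has_real_derivative f' x) (at x within {a..b})"
    and nonpos: "\<And>x. x \<in> {a..b} \<Longrightarrow> f' x \<le> 0"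
  shows "f b \<le> f a"
proof -
  obtain x where x: "x \<in> {a..b}" "f b - f a = f' x * (b - a)"
    using mvt_very_simple[OF \<open>a \<le> b\<close>, of f "\<lambda>x y. f' x * y"] deriv
    by (auto simp: has_field_derivative_def)
  have "f' x * (b - a) \<le> 0"
    using nonpos[OF x(1)] \<open>a \<le> b\<close> by (simp add: mult_nonpos_nonneg)
  with x show ?thesis by simp
qed

lemma RB_diag_solution_ivl_subset:
  "RB_diag_solution n \<rho> J g \<Longrightarrow> s \<in> J \<Longrightarrow> t \<in> J \<Longrightarrow> {s..t} \<subseteq> J"
  unfolding RB_diag_solution_def by (auto intro: mem_is_interval_1_I)

lemma Sig_nonneg:
  assumes pos: "\<And>j. j \<in> {1..4*n} \<Longrightarrow> 0 < G j"
  shows "0 \<le> Sig1 n G" "0 \<le> Sig2 n G" "0 \<le> Sig3 n G"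
proof -
  have "0 \<le> 1 / (G a * G b)" if "a \<in> {1..4*n}" "b \<in> {1..4*n}" for a b
    using pos[OF that(1)] pos[OF that(2)] by simp
  then show "0 \<le> Sig1 n G" "0 \<le> Sig2 n G" "0 \<le> Sig3 n G"
    unfolding Sig1_def Sig2_def Sig3_def by (intro sum_nonneg add_nonneg_nonneg; simp)+
qed

lemma SigP_nonneg:
  assumes pos: "\<And>a. a \<in> {1..4*n+3} \<Longrightarrow> 0 < G a"
  shows "0 \<le> SigP n G"
  using Sig_nonneg[of n G] pos unfolding SigP_def
  by (intro add_nonneg_nonneg mult_nonneg_nonneg) (simp_all add: less_imp_le)

lemma SigK_antimono:
  assumes pos: "\<And>j. j \<in> {1..4*n} \<Longrightarrow> 0 < G j"
    and le: "\<And>j. j \<in> {1..4*n} \<Longrightarrow> G j \<le> H j"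
  shows "SigK n H k \<le> SigK n G k"
proof -
  have "1 / (H a * H b) \<le> 1 / (G a * G b)" if "a \<in> {1..4*n}" "b \<in> {1..4*n}" for a b
    using pos[OF that(1)] pos[OF that(2)] le[OF that(1)] le[OF that(2)]
    by (intro divide_left_mono mult_mono mult_pos_pos) auto
  then have "Sig1 n H \<le> Sig1 n G" "Sig2 n H \<le> Sig2 n G" "Sig3 n H \<le> Sig3 n G"
    unfolding Sig1_def Sig2_def Sig3_def by (intro sum_mono add_mono; simp)+
  then show ?thesis unfolding SigK_def by simp
qed

lemma qrhs_X_nonneg:
  fixes \<rho> :: real
  assumes pos: "\<And>a. a \<in> {1..4*n+3} \<Longrightarrow> 0 < G a" and "\<rho> \<le> 0" and j: "j \<in> {1..4*n}"
  shows "0 \<le> qrhs n \<rho> G j"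
proof -
  have nonneg: "0 \<le> G a / G b + G c / G d + G e / G f - \<rho> * G x * SigP n G"
    if "a \<in> {1..4*n+3}" "b \<in> {1..4*n+3}" "c \<in> {1..4*n+3}" "d \<in> {1..4*n+3}"
      "e \<in> {1..4*n+3}" "f \<in> {1..4*n+3}" "x \<in> {1..4*n+3}" for a b c d e f x
  proof -
    have "0 \<le> G a / G b" "0 \<le> G c / G d" "0 \<le> G e / G f"
      using pos that by (simp_all add: less_imp_le)
    moreover have "\<rho> * G x * SigP n G \<le> 0"
      using \<open>\<rho> \<le> 0\<close> pos[OF that(7)] SigP_nonneg[OF pos]
      by (intro mult_nonpos_nonneg) (simp_all add: mult_nonpos_nonneg)
    ultimately show ?thesis by linarith
  qed
  from j show ?thesis
  proof (cases rule: four_blocks_cases)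
    case (X1 i) then show ?thesis by (simp only: qrhs_X1) (rule nonneg; use X1 in auto)
  next
    case (X2 i) then show ?thesis by (simp only: qrhs_X2) (rule nonneg; use X2 in auto)
  next
    case (X3 i) then show ?thesis by (simp only: qrhs_X3) (rule nonneg; use X3 in auto)
  next
    case (X4 i) then show ?thesis by (simp only: qrhs_X4) (rule nonneg; use X4 in auto)
  qed
qed

lemma RB_diag_solution_X_mono:
  fixes \<rho> :: real
  assumes sol: "RB_diag_solution n \<rho> J g" and "\<rho> \<le> 0"
    and "s \<in> J" "t \<in> J" "s \<le> t" and j: "j \<in> {1..4*n}"
  shows "g s j \<le> g t j"
proof -
  have J: "{s..t} \<subseteq> J" using RB_diag_solution_ivl_subset[OF sol \<open>s \<in> J\<close> \<open>t \<in> J\<close>] .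
  have "- g t j \<le> - g s j"
  proof (rule deriv_nonpos_imp_antimono_within[OF \<open>s \<le> t\<close>])
    fix x assume x: "x \<in> {s..t}"
    with J j show "((\<lambda>r. - g r j) has_real_derivative - qrhs n \<rho> (g x) j) (at x within {s..t})"
      by (intro DERIV_minus has_field_derivative_subset[OF RB_diag_solution_deriv[OF sol]]) auto
    show "- qrhs n \<rho> (g x) j \<le> 0"
      using qrhs_X_nonneg[OF RB_diag_solution_pos[OF sol] \<open>\<rho> \<le> 0\<close> j] x J by auto
  qed
  then show ?thesis by simp
qed

lemma RB_diag_solution_continuous_on:
  "RB_diag_solution n \<rho> J g \<Longrightarrow> S \<subseteq> J \<Longrightarrow> a \<in> {1..4*n+3} \<Longrightarrow> continuous_on S (\<lambda>s. g s a)"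
  by (rule DERIV_continuous_on[where D="\<lambda>s. qrhs n \<rho> (g s) a"])
    (auto intro: has_field_derivative_subset[OF RB_diag_solution_deriv])

lemma RB_diag_solution_Z_lower_bound:
  fixes \<rho> :: real
  assumes sol: "RB_diag_solution n \<rho> J g" and "\<rho> \<le> 0" and t: "t \<in> J" "0 \<le> t" and k: "k \<in> {1..3}"
  shows "1 / (1 / g 0 (4*n+k) + SigK n (g 0) k * t) \<le> g t (4*n+k)"
proof -
  have J0: "0 \<in> J" using sol unfolding RB_diag_solution_def by blast
  have J: "{0..t} \<subseteq> J" using RB_diag_solution_ivl_subset[OF sol J0 t(1)] .
  let ?C = "SigK n (g 0) k"
  have "1 / g t (4*n+k) - ?C * t \<le> 1 / g 0 (4*n+k) - ?C * 0"
  proof (rule deriv_nonpos_imp_antimono_within[OF t(2)])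
    fix x assume x: "x \<in> {0..t}"
    then have "x \<in> J" using J by auto
    note pos = RB_diag_solution_pos[OF sol this]
    have gx: "0 < g x (4*n+k)" using pos k by simp
    have q: "qrhs n \<rho> (g x) (4*n+k) =
        - g x (4*n+k) * g x (4*n+k) * SigK n (g x) k - \<rho> * g x (4*n+k) * SigP n (g x)"
      using qrhs_Z[OF k] .
    have "((\<lambda>r. g r (4*n+k)) has_real_derivative qrhs n \<rho> (g x) (4*n+k)) (at x within {0..t})"
      using k J \<open>x \<in> J\<close>
      by (intro has_field_derivative_subset[OF RB_diag_solution_deriv[OF sol]]) auto
    then show "((\<lambda>r. 1 / g r (4*n+k) - ?C * r) has_real_derivative
        - qrhs n \<rho> (g x) (4*n+k) / (g x (4*n+k))^2 - ?C) (at x within {0..t})"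
      using gx by (auto intro!: derivative_eq_intros simp: power2_eq_square)
    have "- qrhs n \<rho> (g x) (4*n+k) / (g x (4*n+k))^2 = SigK n (g x) k + \<rho> * SigP n (g x) / g x (4*n+k)"
      unfolding q using gx by (simp add: field_simps power2_eq_square)
    moreover have "SigK n (g x) k \<le> ?C"
      using RB_diag_solution_pos[OF sol J0] RB_diag_solution_X_mono[OF sol \<open>\<rho> \<le> 0\<close> J0 \<open>x \<in> J\<close>] x
      by (intro SigK_antimono) auto
    moreover have "\<rho> * SigP n (g x) / g x (4*n+k) \<le> 0"
      using SigP_nonneg[OF pos] \<open>\<rho> \<le> 0\<close> gx by (simp add: divide_nonpos_pos mult_nonpos_nonneg)
    ultimately show "- qrhs n \<rho> (g x) (4*n+k) / (g x (4*n+k))^2 - ?C \<le> 0" by linarith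
  qed
  moreover have "0 < 1 / g t (4*n+k)" using RB_diag_solution_pos[OF sol t(1)] k by simp
  ultimately show ?thesis
    using le_imp_inverse_le[of "1 / g t (4*n+k)"] by (simp add: inverse_eq_divide)
qed

lemma integral_at_top_if_ge_inverse_affine:
  fixes f :: "real \<Rightarrow> real"
  assumes cont: "\<And>t. continuous_on {0..t} f" and "0 < w" "0 \<le> C"
    and ge: "\<And>t. 0 \<le> t \<Longrightarrow> 1 / (w + C * t) \<le> f t"
  shows "filterlim (\<lambda>t. integral {0..t} f) at_top at_top"
proof -
  \<comment> \<open>C + 1 rather than C keeps the antiderivative ln (w + B t) / B available when C = 0.\<close>
  define B where "B = C + 1"
  have "0 < B" using \<open>0 \<le> C\<close> by (simp add: B_def)
  have lower: "(ln (w + B * t) - ln w) / B \<le> integral {0..t} f" if "0 \<le> t" for t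
  proof -
    have FTC: "((\<lambda>r. 1 / (w + B * r)) has_integral (ln (w + B * t) / B - ln (w + B * 0) / B)) {0..t}"
    proof (rule fundamental_theorem_of_calculus[OF \<open>0 \<le> t\<close>])
      fix x assume "x \<in> {0..t}"
      then have "0 < w + B * x" using \<open>0 < w\<close> \<open>0 < B\<close> by (simp add: add_pos_nonneg)
      then show "((\<lambda>r. ln (w + B * r) / B) has_vector_derivative 1 / (w + B * x)) (at x within {0..t})"
        unfolding has_real_derivative_iff_has_vector_derivative[symmetric]
        using \<open>0 < B\<close> by (auto intro!: derivative_eq_intros)
    qed
    have "1 / (w + B * r) \<le> f r" if "r \<in> {0..t}" for r
    proof -
      have "1 / (w + B * r) \<le> 1 / (w + C * r)"
        using that \<open>0 < w\<close> \<open>0 \<le> C\<close>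
        by (intro divide_left_mono mult_pos_pos add_pos_nonneg) (auto simp: B_def distrib_right)
      also have "\<dots> \<le> f r" using ge that by simp
      finally show ?thesis .
    qed
    then have "integral {0..t} (\<lambda>r. 1 / (w + B * r)) \<le> integral {0..t} f"
      by (intro integral_le has_integral_integrable[OF FTC] integrable_continuous_interval cont)
    then show ?thesis using integral_unique[OF FTC] by (simp add: diff_divide_distrib)
  qed
  have "filterlim (\<lambda>t. (ln (w + B * t) - ln w) / B) at_top at_top"
    using \<open>0 < w\<close> \<open>0 < B\<close> by real_asymp
  then show ?thesis
    by (rule filterlim_at_top_mono)
      (use lower in \<open>auto intro: eventually_ge_at_top[THEN eventually_mono]\<close>)
qed

lemma RB_diag_solution_Z_integral_at_top:
  fixes \<rho> :: real
  assumes sol: "RB_diag_solution n \<rho> J g" and "\<rho> \<le> 0" and J: "{0..} \<subseteq> J"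
    and k: "k \<in> {4*n+1..4*n+3}"
  shows "filterlim (\<lambda>t. integral {0..t} (\<lambda>r. g r k)) at_top at_top"
proof -
  obtain l where l: "l \<in> {1..3}" "k = 4*n + l"
    using k by (intro that[of "k - 4*n"]) auto
  have J0: "0 \<in> J" using J by auto
  note pos0 = RB_diag_solution_pos[OF sol J0]
  show ?thesis
  proof (rule integral_at_top_if_ge_inverse_affine)
    show "continuous_on {0..t} (\<lambda>r. g r k)" for t
      using J k by (intro RB_diag_solution_continuous_on[OF sol]) auto
    show "0 < 1 / g 0 k" using pos0 k by simp
    show "0 \<le> SigK n (g 0) l"
      using Sig_nonneg[of n "g 0"] pos0 unfolding SigK_def by simp
    show "1 / (1 / g 0 k + SigK n (g 0) l * t) \<le> g t k" if "0 \<le> t" for t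
      using RB_diag_solution_Z_lower_bound[OF sol \<open>\<rho> \<le> 0\<close> _ that l(1)] J that l(2) by auto
  qed
qed

section \<open>Uniqueness for locally Lipschitz systems\<close>

definition l1_dist :: "nat \<Rightarrow> (nat \<Rightarrow> real) \<Rightarrow> (nat \<Rightarrow> real) \<Rightarrow> real" where
  "l1_dist N G H = (\<Sum>a=1..N. \<bar>G a - H a\<bar>)"

definition coord_box :: "nat \<Rightarrow> real \<Rightarrow> real \<Rightarrow> (nat \<Rightarrow> real) set" where
  "coord_box N m M = {G. \<forall>a\<in>{1..N}. m \<le> G a \<and> G a \<le> M}"

text \<open>Boundedness is part of the notion so that products of such functions are again Lipschitz.\<close>

definition bounded_lipschitz_on :: "nat \<Rightarrow> (nat \<Rightarrow> real) set \<Rightarrow> ((nat \<Rightarrow> real) \<Rightarrow> real) \<Rightarrow> bool" where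
  "bounded_lipschitz_on N S f \<longleftrightarrow>
    (\<exists>L. \<forall>G\<in>S. \<forall>H\<in>S. \<bar>f G - f H\<bar> \<le> L * l1_dist N G H) \<and> (\<exists>C. \<forall>G\<in>S. \<bar>f G\<bar> \<le> C)"

lemma l1_dist_nonneg: "0 \<le> l1_dist N G H"
  unfolding l1_dist_def by (intro sum_nonneg) auto

lemma abs_diff_le_l1_dist: "a \<in> {1..N} \<Longrightarrow> \<bar>G a - H a\<bar> \<le> l1_dist N G H"
  unfolding l1_dist_def by (rule member_le_sum) auto

lemma bounded_lipschitz_onI:
  assumes "\<And>G H. G \<in> S \<Longrightarrow> H \<in> S \<Longrightarrow> \<bar>f G - f H\<bar> \<le> L * l1_dist N G H"
    and "\<And>G. G \<in> S \<Longrightarrow> \<bar>f G\<bar> \<le> C"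
  shows "bounded_lipschitz_on N S f"
  using assms unfolding bounded_lipschitz_on_def by blast

lemma bounded_lipschitz_on_const: "bounded_lipschitz_on N S (\<lambda>G. c)"
  by (rule bounded_lipschitz_onI[where L=0 and C="\<bar>c\<bar>"]) auto

lemma bounded_lipschitz_on_coord:
  assumes "a \<in> {1..N}"
  shows "bounded_lipschitz_on N (coord_box N m M) (\<lambda>G. G a)"
proof (rule bounded_lipschitz_onI[where L=1 and C="max \<bar>m\<bar> \<bar>M\<bar>"])
  show "\<bar>G a - H a\<bar> \<le> 1 * l1_dist N G H" for G H
    using abs_diff_le_l1_dist[OF assms] by simp
  show "\<bar>G a\<bar> \<le> max \<bar>m\<bar> \<bar>M\<bar>" if "G \<in> coord_box N m M" for G
    using that assms unfolding coord_box_def by fastforce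
qed

lemma bounded_lipschitz_on_inverse_coord:
  assumes "a \<in> {1..N}" and "0 < m"
  shows "bounded_lipschitz_on N (coord_box N m M) (\<lambda>G. 1 / G a)"
proof (rule bounded_lipschitz_onI[where L="1 / m^2" and C="1 / m"])
  fix G H assume "G \<in> coord_box N m M" "H \<in> coord_box N m M"
  then have G: "m \<le> G a" and H: "m \<le> H a" using assms(1) unfolding coord_box_def by auto
  have "\<bar>1 / G a - 1 / H a\<bar> = \<bar>G a - H a\<bar> / (G a * H a)"
    using G H \<open>0 < m\<close> by (simp add: field_simps abs_div abs_mult)
  also have "\<dots> \<le> \<bar>G a - H a\<bar> / m^2"
    using G H \<open>0 < m\<close> by (intro divide_left_mono) (auto simp: power2_eq_square intro!: mult_mono)
  also have "\<dots> \<le> 1 / m^2 * l1_dist N G H"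
    using abs_diff_le_l1_dist[OF assms(1)] \<open>0 < m\<close> by (simp add: divide_right_mono)
  finally show "\<bar>1 / G a - 1 / H a\<bar> \<le> 1 / m^2 * l1_dist N G H" .
next
  fix G assume "G \<in> coord_box N m M"
  then have "m \<le> G a" using assms(1) unfolding coord_box_def by auto
  then show "\<bar>1 / G a\<bar> \<le> 1 / m" using \<open>0 < m\<close> by (simp add: frac_le)
qed

lemma bounded_lipschitz_on_add:
  assumes "bounded_lipschitz_on N S f" "bounded_lipschitz_on N S g"
  shows "bounded_lipschitz_on N S (\<lambda>G. f G + g G)"
proof -
  obtain L1 C1 where f: "\<And>G H. G \<in> S \<Longrightarrow> H \<in> S \<Longrightarrow> \<bar>f G - f H\<bar> \<le> L1 * l1_dist N G H"
    "\<And>G. G \<in> S \<Longrightarrow> \<bar>f G\<bar> \<le> C1" using assms(1) unfolding bounded_lipschitz_on_def by blast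
  obtain L2 C2 where g: "\<And>G H. G \<in> S \<Longrightarrow> H \<in> S \<Longrightarrow> \<bar>g G - g H\<bar> \<le> L2 * l1_dist N G H"
    "\<And>G. G \<in> S \<Longrightarrow> \<bar>g G\<bar> \<le> C2" using assms(2) unfolding bounded_lipschitz_on_def by blast
  show ?thesis
  proof (rule bounded_lipschitz_onI[where L="L1 + L2" and C="C1 + C2"])
    show "\<bar>f G + g G - (f H + g H)\<bar> \<le> (L1 + L2) * l1_dist N G H" if "G \<in> S" "H \<in> S" for G H
      using f(1)[OF that] g(1)[OF that] by (simp add: distrib_right abs_triangle_ineq4 add_mono
          order_trans[OF abs_triangle_ineq[of "f G - f H" "g G - g H"]])
    show "\<bar>f G + g G\<bar> \<le> C1 + C2" if "G \<in> S" for G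
      using f(2)[OF that] g(2)[OF that] by linarith
  qed
qed

lemma bounded_lipschitz_on_minus:
  "bounded_lipschitz_on N S f \<Longrightarrow> bounded_lipschitz_on N S (\<lambda>G. - f G)"
  unfolding bounded_lipschitz_on_def by (metis abs_minus_cancel minus_diff_minus)

lemma bounded_lipschitz_on_diff:
  "bounded_lipschitz_on N S f \<Longrightarrow> bounded_lipschitz_on N S g \<Longrightarrow>
    bounded_lipschitz_on N S (\<lambda>G. f G - g G)"
  using bounded_lipschitz_on_add[OF _ bounded_lipschitz_on_minus, of N S f g] by simp

lemma bounded_lipschitz_on_mult:
  assumes "bounded_lipschitz_on N S f" "bounded_lipschitz_on N S g"
  shows "bounded_lipschitz_on N S (\<lambda>G. f G * g G)"
proof -
  obtain L1 C1 where f: "\<And>G H. G \<in> S \<Longrightarrow> H \<in> S \<Longrightarrow> \<bar>f G - f H\<bar> \<le> L1 * l1_dist N G H"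
    "\<And>G. G \<in> S \<Longrightarrow> \<bar>f G\<bar> \<le> C1" using assms(1) unfolding bounded_lipschitz_on_def by blast
  obtain L2 C2 where g: "\<And>G H. G \<in> S \<Longrightarrow> H \<in> S \<Longrightarrow> \<bar>g G - g H\<bar> \<le> L2 * l1_dist N G H"
    "\<And>G. G \<in> S \<Longrightarrow> \<bar>g G\<bar> \<le> C2" using assms(2) unfolding bounded_lipschitz_on_def by blast
  show ?thesis
  proof (rule bounded_lipschitz_onI[where L="C1 * L2 + C2 * L1" and C="C1 * C2"])
    fix G H assume GH: "G \<in> S" "H \<in> S"
    have "f G * g G - f H * g H = f G * (g G - g H) + g H * (f G - f H)"
      by (simp add: algebra_simps)
    then have "\<bar>f G * g G - f H * g H\<bar> \<le> \<bar>f G\<bar> * \<bar>g G - g H\<bar> + \<bar>g H\<bar> * \<bar>f G - f H\<bar>"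
      by (metis abs_mult abs_triangle_ineq)
    also have "\<dots> \<le> C1 * (L2 * l1_dist N G H) + C2 * (L1 * l1_dist N G H)"
      using f(2)[OF GH(1)] g(1)[OF GH] g(2)[OF GH(2)] f(1)[OF GH]
      by (intro add_mono mult_mono) auto
    finally show "\<bar>f G * g G - f H * g H\<bar> \<le> (C1 * L2 + C2 * L1) * l1_dist N G H"
      by (simp add: algebra_simps)
  next
    fix G assume "G \<in> S"
    then show "\<bar>f G * g G\<bar> \<le> C1 * C2"
      using f(2)[OF \<open>G \<in> S\<close>] g(2)[OF \<open>G \<in> S\<close>] by (simp add: abs_mult mult_mono)
  qed
qed

lemma bounded_lipschitz_on_sum:
  "finite I \<Longrightarrow> (\<And>i. i \<in> I \<Longrightarrow> bounded_lipschitz_on N S (f i)) \<Longrightarrow>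
    bounded_lipschitz_on N S (\<lambda>G. \<Sum>i\<in>I. f i G)"
  by (induction I rule: finite_induct)
    (simp_all add: bounded_lipschitz_on_const bounded_lipschitz_on_add)

lemma bounded_lipschitz_on_divide_coord:
  assumes "bounded_lipschitz_on N (coord_box N m M) f" "b \<in> {1..N}" "0 < m"
  shows "bounded_lipschitz_on N (coord_box N m M) (\<lambda>G. f G / G b)"
  using bounded_lipschitz_on_mult[OF assms(1) bounded_lipschitz_on_inverse_coord[OF assms(2,3)]]
  by simp

lemma bounded_lipschitz_on_common_constant:
  assumes "\<And>i. i \<in> {1..N} \<Longrightarrow> bounded_lipschitz_on N S (\<lambda>G. F G i)"
  obtains L where "0 \<le> L"
    and "\<And>i G H. i \<in> {1..N} \<Longrightarrow> G \<in> S \<Longrightarrow> H \<in> S \<Longrightarrow> \<bar>F G i - F H i\<bar> \<le> L * l1_dist N G H"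
proof -
  obtain Li where Li: "\<And>i G H. i \<in> {1..N} \<Longrightarrow> G \<in> S \<Longrightarrow> H \<in> S \<Longrightarrow>
      \<bar>F G i - F H i\<bar> \<le> Li i * l1_dist N G H"
    using assms unfolding bounded_lipschitz_on_def by metis
  define L where "L = (\<Sum>i=1..N. \<bar>Li i\<bar>)"
  have "\<bar>F G i - F H i\<bar> \<le> L * l1_dist N G H" if "i \<in> {1..N}" "G \<in> S" "H \<in> S" for i G H
  proof -
    have "\<bar>Li i\<bar> \<le> L" unfolding L_def by (rule member_le_sum) (use that in auto)
    then have "Li i * l1_dist N G H \<le> L * l1_dist N G H"
      using l1_dist_nonneg by (intro mult_right_mono) auto
    with Li[OF that] show ?thesis by linarith
  qed
  moreover have "0 \<le> L" unfolding L_def by (intro sum_nonneg) auto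
  ultimately show ?thesis using that by blast
qed

lemma gronwall_zero_iff:
  fixes u u' :: "real \<Rightarrow> real"
  assumes "a \<le> b"
    and deriv: "\<And>s. s \<in> {a..b} \<Longrightarrow> (u has_real_derivative u' s) (at s within {a..b})"
    and bound: "\<And>s. s \<in> {a..b} \<Longrightarrow> \<bar>u' s\<bar> \<le> K * u s"
    and nonneg: "\<And>s. s \<in> {a..b} \<Longrightarrow> 0 \<le> u s"
  shows "u a = 0 \<longleftrightarrow> u b = 0"
proof -
  have "u b * exp (- K * b) \<le> u a * exp (- K * a)"
  proof (rule deriv_nonpos_imp_antimono_within[OF \<open>a \<le> b\<close>])
    fix s assume s: "s \<in> {a..b}"
    show "((\<lambda>s. u s * exp (- K * s)) has_real_derivative (u' s - K * u s) * exp (- K * s))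
        (at s within {a..b})"
      by (rule derivative_eq_intros deriv[OF s] refl | simp add: algebra_simps)+
    show "(u' s - K * u s) * exp (- K * s) \<le> 0"
      using bound[OF s] by (simp add: mult_nonpos_nonneg)
  qed
  moreover have "- (u b * exp (K * b)) \<le> - (u a * exp (K * a))"
  proof (rule deriv_nonpos_imp_antimono_within[OF \<open>a \<le> b\<close>])
    fix s assume s: "s \<in> {a..b}"
    show "((\<lambda>s. - (u s * exp (K * s))) has_real_derivative - ((u' s + K * u s) * exp (K * s)))
        (at s within {a..b})"
      by (rule derivative_eq_intros deriv[OF s] refl | simp add: algebra_simps)+
    show "- ((u' s + K * u s) * exp (K * s)) \<le> 0"
      using bound[OF s] by simp
  qed
  moreover have "0 \<le> u a" "0 \<le> u b" using nonneg \<open>a \<le> b\<close> by auto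
  ultimately show ?thesis by (auto simp: mult_le_0_iff)
qed

lemma lipschitz_ode_solutions_eq_iff:
  fixes F :: "(nat \<Rightarrow> real) \<Rightarrow> nat \<Rightarrow> real" and g h :: "real \<Rightarrow> nat \<Rightarrow> real"
  assumes "a \<le> b"
    and lip: "\<And>i. i \<in> {1..N} \<Longrightarrow> bounded_lipschitz_on N S (\<lambda>G. F G i)"
    and in_S: "\<And>s. s \<in> {a..b} \<Longrightarrow> g s \<in> S \<and> h s \<in> S"
    and dg: "\<And>s i. s \<in> {a..b} \<Longrightarrow> i \<in> {1..N} \<Longrightarrow>
      ((\<lambda>r. g r i) has_real_derivative F (g s) i) (at s within {a..b})"
    and dh: "\<And>s i. s \<in> {a..b} \<Longrightarrow> i \<in> {1..N} \<Longrightarrow>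
      ((\<lambda>r. h r i) has_real_derivative F (h s) i) (at s within {a..b})"
  shows "(\<forall>i\<in>{1..N}. g a i = h a i) \<longleftrightarrow> (\<forall>i\<in>{1..N}. g b i = h b i)"
proof -
  obtain L where "0 \<le> L"
    and L: "\<And>i G H. i \<in> {1..N} \<Longrightarrow> G \<in> S \<Longrightarrow> H \<in> S \<Longrightarrow> \<bar>F G i - F H i\<bar> \<le> L * l1_dist N G H"
    using bounded_lipschitz_on_common_constant[of N S F, OF lip] by blast
  define u where "u s = (\<Sum>i=1..N. (g s i - h s i)^2)" for s
  define u' where "u' s = (\<Sum>i=1..N. 2 * (g s i - h s i) * (F (g s) i - F (h s) i))" for s
  have "u a = 0 \<longleftrightarrow> u b = 0"
  proof (rule gronwall_zero_iff[OF \<open>a \<le> b\<close>, where u' = u' and K = "2 * L * N"])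
    fix s assume s: "s \<in> {a..b}"
    have "((\<lambda>r. (g r i - h r i)^2) has_real_derivative
        2 * (g s i - h s i) * (F (g s) i - F (h s) i)) (at s within {a..b})" if "i \<in> {1..N}" for i
      by (rule DERIV_cong[OF DERIV_power[OF DERIV_diff[OF dg[OF s that] dh[OF s that]]]])
        (simp add: algebra_simps)
    then show "(u has_real_derivative u' s) (at s within {a..b})"
      unfolding u_def[abs_def] u'_def by (rule DERIV_sum)
    define D where "D = l1_dist N (g s) (h s)"
    have "\<bar>u' s\<bar> \<le> (\<Sum>i=1..N. \<bar>2 * (g s i - h s i) * (F (g s) i - F (h s) i)\<bar>)"
      unfolding u'_def by (rule sum_abs)
    also have "\<dots> \<le> (\<Sum>i=1..N. 2 * \<bar>g s i - h s i\<bar> * (L * D))"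
    proof (rule sum_mono)
      fix i assume "i \<in> {1..N}"
      then have "\<bar>F (g s) i - F (h s) i\<bar> \<le> L * D"
        using L in_S[OF s] by (simp add: D_def)
      then show "\<bar>2 * (g s i - h s i) * (F (g s) i - F (h s) i)\<bar> \<le> 2 * \<bar>g s i - h s i\<bar> * (L * D)"
        unfolding abs_mult abs_numeral mult.assoc by (intro mult_left_mono) simp_all
    qed
    also have "\<dots> = 2 * L * D^2"
      by (simp add: D_def l1_dist_def sum_distrib_left sum_distrib_right power2_eq_square mult_ac)
    also have "\<dots> \<le> 2 * L * (u s * N)"
    proof -
      have "D^2 \<le> (\<Sum>i=1..N. \<bar>g s i - h s i\<bar>^2) * card {1..N}"
        unfolding D_def l1_dist_def by (rule sum_squared_le_sum_of_squares)
      then show ?thesis using \<open>0 \<le> L\<close> by (simp add: u_def mult_left_mono)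
    qed
    finally show "\<bar>u' s\<bar> \<le> 2 * L * N * u s" by (simp add: mult_ac)
    show "0 \<le> u s" unfolding u_def by (intro sum_nonneg) auto
  qed
  moreover have "u s = 0 \<longleftrightarrow> (\<forall>i\<in>{1..N}. g s i = h s i)" for s
    unfolding u_def by (subst sum_nonneg_eq_0_iff) auto
  ultimately show ?thesis by simp
qed

lemma continuous_positive_in_coord_box:
  assumes "compact I"
    and cont: "\<And>i. i \<in> {1..N} \<Longrightarrow> continuous_on I (\<lambda>s. g s i)"
    and pos: "\<And>s i. s \<in> I \<Longrightarrow> i \<in> {1..N} \<Longrightarrow> 0 < g s i"
  shows "\<exists>m M. 0 < m \<and> (\<forall>s\<in>I. g s \<in> coord_box N m M)"
proof -
  define K where "K = (\<Union>i\<in>{1..N}. (\<lambda>s. g s i) ` I)"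
  have "compact K"
    unfolding K_def using \<open>compact I\<close> cont by (intro compact_UN compact_continuous_image) auto
  then obtain M where M: "\<And>x. x \<in> K \<Longrightarrow> \<bar>x\<bar> \<le> M"
    using compact_imp_bounded[OF \<open>compact K\<close>] unfolding bounded_real by blast
  obtain m where m: "0 < m" "\<And>x. x \<in> K \<Longrightarrow> m \<le> x"
  proof (cases "K = {}")
    case True
    then show ?thesis using that[of 1] by simp
  next
    case False
    then obtain x where x: "x \<in> K" "\<And>y. y \<in> K \<Longrightarrow> x \<le> y"
      using compact_attains_inf[OF \<open>compact K\<close>] by blast
    moreover have "0 < x" using x(1) pos unfolding K_def by blast
    ultimately show ?thesis using that by blast
  qed
  have "g s \<in> coord_box N m M" if "s \<in> I" for s
  proof -
    have "g s i \<in> K" if "i \<in> {1..N}" for i unfolding K_def using that \<open>s \<in> I\<close> by blast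
    with m(2) M show ?thesis by (auto simp: coord_box_def abs_le_iff)
  qed
  with m(1) show ?thesis by blast
qed

lemma positive_ode_solutions_eq:
  fixes F :: "(nat \<Rightarrow> real) \<Rightarrow> nat \<Rightarrow> real" and g h :: "real \<Rightarrow> nat \<Rightarrow> real"
  assumes lip: "\<And>i m M. i \<in> {1..N} \<Longrightarrow> 0 < m \<Longrightarrow> bounded_lipschitz_on N (coord_box N m M) (\<lambda>G. F G i)"
    and dg: "\<And>s i. s \<in> closed_segment a b \<Longrightarrow> i \<in> {1..N} \<Longrightarrow>
      ((\<lambda>r. g r i) has_real_derivative F (g s) i) (at s within closed_segment a b)"
    and dh: "\<And>s i. s \<in> closed_segment a b \<Longrightarrow> i \<in> {1..N} \<Longrightarrow>
      ((\<lambda>r. h r i) has_real_derivative F (h s) i) (at s within closed_segment a b)"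
    and pos: "\<And>s i. s \<in> closed_segment a b \<Longrightarrow> i \<in> {1..N} \<Longrightarrow> 0 < g s i \<and> 0 < h s i"
    and init: "\<And>i. i \<in> {1..N} \<Longrightarrow> g a i = h a i"
  shows "i \<in> {1..N} \<Longrightarrow> g b i = h b i"
proof -
  let ?I = "closed_segment a b"
  have cont_g: "continuous_on ?I (\<lambda>s. g s i)" if "i \<in> {1..N}" for i
    by (rule DERIV_continuous_on[OF dg[OF _ that]])
  have cont_h: "continuous_on ?I (\<lambda>s. h s i)" if "i \<in> {1..N}" for i
    by (rule DERIV_continuous_on[OF dh[OF _ that]])
  have "\<exists>m M. 0 < m \<and> (\<forall>s\<in>?I. g s \<in> coord_box N m M)"
    by (rule continuous_positive_in_coord_box) (simp_all add: cont_g pos)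
  then obtain m1 M1 where "0 < m1" and g_box: "\<And>s. s \<in> ?I \<Longrightarrow> g s \<in> coord_box N m1 M1"
    by blast
  have "\<exists>m M. 0 < m \<and> (\<forall>s\<in>?I. h s \<in> coord_box N m M)"
    by (rule continuous_positive_in_coord_box) (simp_all add: cont_h pos)
  then obtain m2 M2 where "0 < m2" and h_box: "\<And>s. s \<in> ?I \<Longrightarrow> h s \<in> coord_box N m2 M2"
    by blast
  let ?S = "coord_box N (min m1 m2) (max M1 M2)"
  have in_S: "g s \<in> ?S \<and> h s \<in> ?S" if "s \<in> ?I" for s
    using g_box[OF that] h_box[OF that] by (auto simp: coord_box_def)
  have lip': "\<And>i. i \<in> {1..N} \<Longrightarrow> bounded_lipschitz_on N ?S (\<lambda>G. F G i)"
    using lip \<open>0 < m1\<close> \<open>0 < m2\<close> by simp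
  have "(\<forall>i\<in>{1..N}. g a i = h a i) \<longleftrightarrow> (\<forall>i\<in>{1..N}. g b i = h b i)"
  proof (cases "a \<le> b")
    case True
    then have I: "?I = {a..b}" by (simp add: closed_segment_eq_real_ivl)
    show ?thesis
      by (rule lipschitz_ode_solutions_eq_iff[OF True lip']) (use in_S dg dh in \<open>simp_all add: I\<close>)
  next
    case False
    then have I: "?I = {b..a}" by (simp add: closed_segment_eq_real_ivl)
    have "b \<le> a" using False by simp
    show ?thesis
      by (rule lipschitz_ode_solutions_eq_iff[OF \<open>b \<le> a\<close> lip', symmetric])
        (use in_S dg dh in \<open>simp_all add: I\<close>)
  qed
  then show "i \<in> {1..N} \<Longrightarrow> g b i = h b i" using init by blast
qed

lemma bounded_lipschitz_on_Sig:
  assumes "0 < m"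
  shows "bounded_lipschitz_on (4*n+3) (coord_box (4*n+3) m M) (Sig1 n)"
    and "bounded_lipschitz_on (4*n+3) (coord_box (4*n+3) m M) (Sig2 n)"
    and "bounded_lipschitz_on (4*n+3) (coord_box (4*n+3) m M) (Sig3 n)"
proof -
  have inv: "bounded_lipschitz_on (4*n+3) (coord_box (4*n+3) m M) (\<lambda>G. 1 / (G a * G b))"
    if "a \<in> {1..4*n+3}" "b \<in> {1..4*n+3}" for a b
    using bounded_lipschitz_on_mult[OF bounded_lipschitz_on_inverse_coord[OF that(1) assms]
        bounded_lipschitz_on_inverse_coord[OF that(2) assms]]
    by simp
  show "bounded_lipschitz_on (4*n+3) (coord_box (4*n+3) m M) (Sig1 n)"
    "bounded_lipschitz_on (4*n+3) (coord_box (4*n+3) m M) (Sig2 n)"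
    "bounded_lipschitz_on (4*n+3) (coord_box (4*n+3) m M) (Sig3 n)"
    unfolding Sig1_def Sig2_def Sig3_def
    by (intro bounded_lipschitz_on_sum bounded_lipschitz_on_add inv; simp)+
qed

lemma bounded_lipschitz_on_SigP:
  "0 < m \<Longrightarrow> bounded_lipschitz_on (4*n+3) (coord_box (4*n+3) m M) (SigP n)"
  unfolding SigP_def
  by (intro bounded_lipschitz_on_add bounded_lipschitz_on_mult bounded_lipschitz_on_coord
      bounded_lipschitz_on_Sig; simp)

lemma bounded_lipschitz_on_qrhs:
  assumes "0 < m" and a: "a \<in> {1..4*n+3}"
  shows "bounded_lipschitz_on (4*n+3) (coord_box (4*n+3) m M) (\<lambda>G. qrhs n \<rho> G a)"
proof (cases "a \<le> 4*n")
  case True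
  note intros = bounded_lipschitz_on_diff bounded_lipschitz_on_add bounded_lipschitz_on_divide_coord
    bounded_lipschitz_on_mult bounded_lipschitz_on_coord bounded_lipschitz_on_const
    bounded_lipschitz_on_SigP \<open>0 < m\<close>
  from True a have "a \<in> {1..4*n}" by simp
  then show ?thesis
  proof (cases rule: four_blocks_cases)
    case (X1 i) then show ?thesis by (simp only: qrhs_X1) (intro intros; use X1 in simp)
  next
    case (X2 i) then show ?thesis by (simp only: qrhs_X2) (intro intros; use X2 in simp)
  next
    case (X3 i) then show ?thesis by (simp only: qrhs_X3) (intro intros; use X3 in simp)
  next
    case (X4 i) then show ?thesis by (simp only: qrhs_X4) (intro intros; use X4 in simp)
  qed
next
  case False
  then obtain k where k: "k \<in> {1..3}" "a = 4*n + k"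
    using a by (intro that[of "a - 4*n"]) auto
  have "bounded_lipschitz_on (4*n+3) (coord_box (4*n+3) m M) (\<lambda>G. SigK n G k)"
    using bounded_lipschitz_on_Sig[OF \<open>0 < m\<close>, of n M] unfolding SigK_def
    by (cases "k = 1"; cases "k = 2") simp_all
  with k show ?thesis
    by (simp only: qrhs_Z)
      (intro bounded_lipschitz_on_diff bounded_lipschitz_on_mult bounded_lipschitz_on_minus
        bounded_lipschitz_on_coord bounded_lipschitz_on_const bounded_lipschitz_on_SigP \<open>0 < m\<close>; simp)
qed

section \<open>The symmetric solution\<close>

lemma Sig_X_const:
  assumes X: "\<And>j. j \<in> {1..4*n} \<Longrightarrow> G j = x"
  shows "Sig1 n G = 2 * real n / x^2" "Sig2 n G = 2 * real n / x^2" "Sig3 n G = 2 * real n / x^2"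
proof -
  have "G i = x \<and> G (n+i) = x \<and> G (2*n+i) = x \<and> G (3*n+i) = x" if "i \<in> {1..n}" for i
    using X that by simp
  then have "Sig1 n G = (\<Sum>i=1..n. 2 / x^2)" "Sig2 n G = (\<Sum>i=1..n. 2 / x^2)"
    "Sig3 n G = (\<Sum>i=1..n. 2 / x^2)"
    unfolding Sig1_def Sig2_def Sig3_def by (auto intro!: sum.cong simp: power2_eq_square)
  then show "Sig1 n G = 2 * real n / x^2" "Sig2 n G = 2 * real n / x^2" "Sig3 n G = 2 * real n / x^2"
    by simp_all
qed

lemma qrhs_symmetric:
  fixes n :: nat and \<rho> x z :: real
  assumes X: "\<And>j. j \<in> {1..4*n} \<Longrightarrow> G j = x" and Z: "\<And>k. k \<in> {1..3} \<Longrightarrow> G (4*n+k) = z"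
    and "x \<noteq> 0"
  shows "j \<in> {1..4*n} \<Longrightarrow> qrhs n \<rho> G j = (3 - 6 * real n * \<rho>) * z / x"
    and "k \<in> {1..3} \<Longrightarrow> qrhs n \<rho> G (4*n+k) = - (2 * real n + 6 * real n * \<rho>) * z^2 / x^2"
proof -
  have Zs: "G (4*n+1) = z" "G (4*n+2) = z" "G (4*n+3) = z" using Z[of 1] Z[of 2] Z[of 3] by simp_all
  have SigP: "SigP n G = 6 * real n * z / x^2"
    using Sig_X_const[OF X] Zs by (simp add: SigP_def field_simps)
  show "qrhs n \<rho> G j = (3 - 6 * real n * \<rho>) * z / x" if "j \<in> {1..4*n}"
    using that
  proof (cases rule: four_blocks_cases)
    case (X1 i)
    then have "G i = x" "G (n+i) = x" "G (2*n+i) = x" "G (3*n+i) = x" using X by simp_all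
    with X1 \<open>x \<noteq> 0\<close> show ?thesis
      by (simp only: qrhs_X1 Zs SigP) (simp add: field_simps power2_eq_square)
  next
    case (X2 i)
    then have "G i = x" "G (n+i) = x" "G (2*n+i) = x" "G (3*n+i) = x" using X by simp_all
    with X2 \<open>x \<noteq> 0\<close> show ?thesis
      by (simp only: qrhs_X2 Zs SigP) (simp add: field_simps power2_eq_square)
  next
    case (X3 i)
    then have "G i = x" "G (n+i) = x" "G (2*n+i) = x" "G (3*n+i) = x" using X by simp_all
    with X3 \<open>x \<noteq> 0\<close> show ?thesis
      by (simp only: qrhs_X3 Zs SigP) (simp add: field_simps power2_eq_square)
  next
    case (X4 i)
    then have "G i = x" "G (n+i) = x" "G (2*n+i) = x" "G (3*n+i) = x" using X by simp_all
    with X4 \<open>x \<noteq> 0\<close> show ?thesis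
      by (simp only: qrhs_X4 Zs SigP) (simp add: field_simps power2_eq_square)
  qed
  show "qrhs n \<rho> G (4*n+k) = - (2 * real n + 6 * real n * \<rho>) * z^2 / x^2" if "k \<in> {1..3}"
  proof -
    have "SigK n G k = 2 * real n / x^2" using Sig_X_const[OF X] unfolding SigK_def by simp
    with that Z[OF that] SigP \<open>x \<noteq> 0\<close> show ?thesis
      by (simp only: qrhs_Z) (simp add: field_simps power2_eq_square)
  qed
qed

lemma powr_pair_has_derivative:
  fixes x0 z0 c p q A B s :: real
  assumes "0 < x0" and W: "0 < 1 + c * s" and qp: "q = 2 * p - 1"
    and pc: "p * c = A * z0 / x0^2" and qc: "q * c = B * z0 / x0^2"
  shows "((\<lambda>r. x0 * (1 + c * r) powr p) has_real_derivative
      A * (z0 * (1 + c * s) powr q) / (x0 * (1 + c * s) powr p)) (at s)"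
    and "((\<lambda>r. z0 * (1 + c * r) powr q) has_real_derivative
      B * (z0 * (1 + c * s) powr q)^2 / (x0 * (1 + c * s) powr p)^2) (at s)"
proof -
  define w where "w = 1 + c * s"
  define y where "y = w powr p"
  have "0 < w" "0 < y" using W by (simp_all add: w_def y_def)
  have "q = (p + p) - 1" using qp by simp
  then have "w powr q = w powr p * w powr p / w powr 1"
    by (simp only: powr_diff powr_add)
  then have Wq: "w powr q = y^2 / w"
    using \<open>0 < w\<close> by (simp add: y_def power2_eq_square)
  have cp: "c * p = A * z0 / x0^2" and cq: "c * q = B * z0 / x0^2"
    using pc qc by (simp_all add: mult.commute)
  have d: "((\<lambda>r. (1 + c * r) powr e) has_real_derivative c * e * (w powr e / w)) (at s)" for e
    using W by (auto intro!: derivative_eq_intros simp: w_def powr_diff mult_ac)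
  show "((\<lambda>r. x0 * (1 + c * r) powr p) has_real_derivative
      A * (z0 * (1 + c * s) powr q) / (x0 * (1 + c * s) powr p)) (at s)"
  proof (rule DERIV_cong[OF DERIV_cmult[OF d]])
    show "x0 * (c * p * (w powr p / w)) = A * (z0 * (1 + c * s) powr q) / (x0 * (1 + c * s) powr p)"
      using \<open>0 < x0\<close> \<open>0 < y\<close> \<open>0 < w\<close> unfolding w_def[symmetric] Wq y_def[symmetric] cp
      by (simp add: field_simps power2_eq_square)
  qed
  show "((\<lambda>r. z0 * (1 + c * r) powr q) has_real_derivative
      B * (z0 * (1 + c * s) powr q)^2 / (x0 * (1 + c * s) powr p)^2) (at s)"
  proof (rule DERIV_cong[OF DERIV_cmult[OF d]])
    show "z0 * (c * q * (w powr q / w)) =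
        B * (z0 * (1 + c * s) powr q)^2 / (x0 * (1 + c * s) powr p)^2"
      using \<open>0 < x0\<close> \<open>0 < y\<close> \<open>0 < w\<close> unfolding w_def[symmetric] Wq y_def[symmetric] cq
      by (simp add: field_simps power2_eq_square)
  qed
qed

definition RB_symmetric_curve :: "nat \<Rightarrow> real \<Rightarrow> real \<Rightarrow> real \<Rightarrow> real \<Rightarrow> nat \<Rightarrow> real" where
  "RB_symmetric_curve n \<rho> x0 z0 t a =
    (let c = z0 / x0^2 * (6 + 2*n - 6*n*\<rho>) in
     if a \<le> 4*n then x0 * (1 + c*t) powr (3*(1 - 2*n*\<rho>) / (6 + 2*n - 6*n*\<rho>))
     else z0 * (1 + c*t) powr (- (n*(1 + 3*\<rho>)) / (3 + n - 3*n*\<rho>)))"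

lemma RB_symmetric_curve_has_derivative:
  fixes n :: nat and \<rho> x0 z0 s :: real
  assumes "0 < x0" and E: "3 + n - 3*n*\<rho> \<noteq> 0"
    and s: "0 < 1 + z0 / x0^2 * (6 + 2*n - 6*n*\<rho>) * s" and a: "a \<in> {1..4*n+3}"
  shows "((\<lambda>r. RB_symmetric_curve n \<rho> x0 z0 r a) has_real_derivative
      qrhs n \<rho> (RB_symmetric_curve n \<rho> x0 z0 s) a) (at s)"
proof -
  define c where "c = z0 / x0^2 * (6 + 2*n - 6*n*\<rho>)"
  define p where "p = 3*(1 - 2*n*\<rho>) / (6 + 2*n - 6*n*\<rho>)"
  define q where "q = - (n*(1 + 3*\<rho>)) / (3 + n - 3*n*\<rho>)"
  have curve: "RB_symmetric_curve n \<rho> x0 z0 r b =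
      (if b \<le> 4*n then x0 * (1 + c*r) powr p else z0 * (1 + c*r) powr q)" for r b
    by (simp add: RB_symmetric_curve_def c_def p_def q_def)
  define D where "D = 6 + 2*n - 6*n*\<rho>"
  have "D \<noteq> 0" and half_D: "3 + n - 3*n*\<rho> = D / 2" using E by (simp_all add: D_def)
  have qp: "q = 2 * p - 1"
    using \<open>D \<noteq> 0\<close> unfolding p_def q_def half_D D_def[symmetric] by (simp add: field_simps D_def)
  have pc: "p * c = (3 - 6 * real n * \<rho>) * z0 / x0^2"
    using \<open>D \<noteq> 0\<close> \<open>0 < x0\<close> unfolding p_def c_def D_def[symmetric] by (simp add: field_simps)
  have qc: "q * c = - (2 * real n + 6 * real n * \<rho>) * z0 / x0^2"
    using \<open>D \<noteq> 0\<close> \<open>0 < x0\<close> unfolding q_def c_def half_D D_def[symmetric] by (simp add: field_simps)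
  have "0 < 1 + c * s" using s by (simp add: c_def)
  let ?x = "x0 * (1 + c * s) powr p" and ?z = "z0 * (1 + c * s) powr q"
  have "?x \<noteq> 0" using \<open>0 < x0\<close> \<open>0 < 1 + c * s\<close> by simp
  have X: "\<And>j. j \<in> {1..4*n} \<Longrightarrow> RB_symmetric_curve n \<rho> x0 z0 s j = ?x"
    and Z: "\<And>k. k \<in> {1..3} \<Longrightarrow> RB_symmetric_curve n \<rho> x0 z0 s (4*n+k) = ?z"
    by (simp_all add: curve)
  note pair = powr_pair_has_derivative[OF \<open>0 < x0\<close> \<open>0 < 1 + c * s\<close> qp pc qc]
  note sym = qrhs_symmetric[where G = "RB_symmetric_curve n \<rho> x0 z0 s" and n = n, OF X Z \<open>?x \<noteq> 0\<close>]
  show ?thesis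
  proof (cases "a \<le> 4*n")
    case True
    then show ?thesis
      using pair(1) sym(1)[of a \<rho>] a by (simp add: curve)
  next
    case False
    then obtain k where "k \<in> {1..3}" "a = 4*n + k"
      using a by (intro that[of "a - 4*n"]) auto
    then show ?thesis
      using pair(2) sym(2)[of k \<rho>] by (simp add: curve)
  qed
qed

lemma RB_symmetric_curve_pos:
  "0 < x0 \<Longrightarrow> 0 < z0 \<Longrightarrow> 0 < 1 + z0 / x0^2 * (6 + 2*n - 6*n*\<rho>) * t \<Longrightarrow>
    0 < RB_symmetric_curve n \<rho> x0 z0 t a"
  by (auto simp: RB_symmetric_curve_def Let_def)

lemma RB_symmetric_curve_at_0:
  "RB_symmetric_curve n \<rho> x0 z0 0 a = (if a \<le> 4*n then x0 else z0)"
  by (simp add: RB_symmetric_curve_def)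

lemma RB_diag_solution_segment_subset:
  "RB_diag_solution n \<rho> J g \<Longrightarrow> s \<in> J \<Longrightarrow> t \<in> J \<Longrightarrow> closed_segment s t \<subseteq> J"
  by (simp add: closed_segment_eq_real_ivl RB_diag_solution_ivl_subset)

lemma affine_pos_on_closed_segment:
  fixes c s t :: real
  assumes "0 < 1 + c * t" and "s \<in> closed_segment 0 t"
  shows "0 < 1 + c * s"
proof -
  obtain u where u: "0 \<le> u" "u \<le> 1" "s = u * t"
    using assms(2) by (auto simp: in_segment)
  then have "1 + c * s = (1 - u) + u * (1 + c * t)" by (simp add: algebra_simps)
  also have "0 < \<dots>"
    using u assms(1) by (cases "u < 1") (auto intro: add_pos_nonneg)
  finally show ?thesis .
qed

lemma RB_diag_solution_eq_symmetric_curve: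
  fixes n :: nat and \<rho> :: real
  assumes sol: "RB_diag_solution n \<rho> J g"
    and X0: "\<forall>j\<in>{1..4*n}. g 0 j = g 0 1"
    and Z0: "g 0 (4*n+2) = g 0 (4*n+1)" "g 0 (4*n+3) = g 0 (4*n+1)"
    and E: "3 + n - 3*n*\<rho> \<noteq> 0"
    and t: "t \<in> J" and ct: "0 < 1 + g 0 (4*n+1) / (g 0 1)^2 * (6 + 2*n - 6*n*\<rho>) * t"
    and a: "a \<in> {1..4*n+3}"
  shows "g t a = RB_symmetric_curve n \<rho> (g 0 1) (g 0 (4*n+1)) t a"
proof -
  let ?h = "RB_symmetric_curve n \<rho> (g 0 1) (g 0 (4*n+1))"
  let ?c = "g 0 (4*n+1) / (g 0 1)^2 * (6 + 2*n - 6*n*\<rho>)"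
  have J0: "0 \<in> J" using sol unfolding RB_diag_solution_def by blast
  have seg: "closed_segment 0 t \<subseteq> J" using RB_diag_solution_segment_subset[OF sol J0 t] .
  have pos0: "0 < g 0 1" "0 < g 0 (4*n+1)" using RB_diag_solution_pos[OF sol J0] by simp_all
  have cs: "0 < 1 + ?c * s" if "s \<in> closed_segment 0 t" for s
    using affine_pos_on_closed_segment[OF ct that] .
  show ?thesis
  proof (rule positive_ode_solutions_eq[where F = "\<lambda>G a. qrhs n \<rho> G a" and a = 0 and b = t,
        OF _ _ _ _ _ a])
    show "bounded_lipschitz_on (4*n+3) (coord_box (4*n+3) m M) (\<lambda>G. qrhs n \<rho> G i)"
      if "i \<in> {1..4*n+3}" "0 < m" for i m M
      using that(2,1) by (rule bounded_lipschitz_on_qrhs)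
    show "((\<lambda>r. g r i) has_real_derivative qrhs n \<rho> (g s) i) (at s within closed_segment 0 t)"
      if "s \<in> closed_segment 0 t" "i \<in> {1..4*n+3}" for s i
      using that seg by (intro has_field_derivative_subset[OF RB_diag_solution_deriv[OF sol]]) auto
    show "((\<lambda>r. ?h r i) has_real_derivative qrhs n \<rho> (?h s) i) (at s within closed_segment 0 t)"
      if "s \<in> closed_segment 0 t" "i \<in> {1..4*n+3}" for s i
      using RB_symmetric_curve_has_derivative[OF pos0(1) E cs[OF that(1)] that(2)]
      by (rule has_field_derivative_at_within)
    show "0 < g s i \<and> 0 < ?h s i" if "s \<in> closed_segment 0 t" "i \<in> {1..4*n+3}" for s i
    proof
      show "0 < g s i" using RB_diag_solution_pos[OF sol _ that(2)] that(1) seg by blast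
      show "0 < ?h s i" using RB_symmetric_curve_pos[OF pos0 cs[OF that(1)]] .
    qed
    show "g 0 i = ?h 0 i" if "i \<in> {1..4*n+3}" for i
    proof (cases "i \<le> 4*n")
      case True
      with that have "i \<in> {1..4*n}" by simp
      with X0 have "g 0 i = g 0 1" by blast
      with True show ?thesis by (simp add: RB_symmetric_curve_at_0)
    next
      case False
      then have "i = 4*n+1 \<or> i = 4*n+2 \<or> i = 4*n+3" using that by auto
      then show ?thesis using Z0 by (auto simp: RB_symmetric_curve_at_0)
    qed
  qed
qed

theorem theorem2p7:
  fixes n :: nat and \<rho> :: real and J :: "real set" and g :: "real \<Rightarrow> nat \<Rightarrow> real"
  assumes n: "n \<ge> 1"
    and sol: "RB_diag_solution n \<rho> J g"
  shows
    "(1 + 3*\<rho> \<noteq> 0 \<longrightarrow>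
        (\<forall>t\<in>J. ((\<lambda>s. (\<Prod>j=1..4*n. g s j) *
                   (g s (4*n+1) * g s (4*n+2) * g s (4*n+3)) powr (2*(1 - 2*n*\<rho>) / (1 + 3*\<rho>)))
                 has_real_derivative 0) (at t within J)))
     \<and> (\<rho> < 0 \<and> {0..} \<subseteq> J \<longrightarrow>
        (\<forall>k\<in>{4*n+1..4*n+3}. filterlim (\<lambda>t. integral {0..t} (\<lambda>r. g r k)) at_top at_top))
     \<and> ((\<forall>j\<in>{1..4*n}. g 0 j = g 0 1) \<and> g 0 (4*n+2) = g 0 (4*n+1) \<and> g 0 (4*n+3) = g 0 (4*n+1)
         \<and> 3 + n - 3*n*\<rho> \<noteq> 0 \<longrightarrow>
        (let c = g 0 (4*n+1) / (g 0 1)^2 * (6 + 2*n - 6*n*\<rho>) in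
          \<forall>t\<in>J. 1 + c*t > 0 \<longrightarrow>
            (\<forall>j\<in>{1..4*n}. g t j = g 0 1 * (1 + c*t) powr (3*(1 - 2*n*\<rho>) / (6 + 2*n - 6*n*\<rho>)))
          \<and> (\<forall>k\<in>{1..3}. g t (4*n+k) = g 0 (4*n+1) * (1 + c*t) powr (- (n*(1 + 3*\<rho>)) / (3 + n - 3*n*\<rho>)))))"
proof -
  have symmetric:
    "(\<forall>j\<in>{1..4*n}. g t j = g 0 1 * (1 + c*t) powr (3*(1 - 2*n*\<rho>) / (6 + 2*n - 6*n*\<rho>)))
      \<and> (\<forall>k\<in>{1..3}. g t (4*n+k) = g 0 (4*n+1) * (1 + c*t) powr (- (n*(1 + 3*\<rho>)) / (3 + n - 3*n*\<rho>)))"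
    if "\<forall>j\<in>{1..4*n}. g 0 j = g 0 1" "g 0 (4*n+2) = g 0 (4*n+1)" "g 0 (4*n+3) = g 0 (4*n+1)"
      "3 + n - 3*n*\<rho> \<noteq> 0" "c = g 0 (4*n+1) / (g 0 1)^2 * (6 + 2*n - 6*n*\<rho>)" "t \<in> J" "1 + c*t > 0"
    for c t
    using RB_diag_solution_eq_symmetric_curve[OF sol that(1-4,6)] that(5,7)
    by (simp add: RB_symmetric_curve_def)
  show ?thesis
    unfolding Let_def
    using RB_volume_has_derivative_zero[OF sol]
      RB_diag_solution_Z_integral_at_top[OF sol less_imp_le] symmetric[OF _ _ _ _ refl]
    by blast
qed

end
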